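(* Let $A_n=1$ if $n=2^{k+1}-2$ for some integer $k\ge0$ and $A_n=0$ otherwise, let $D(n)=\det\left(A_{i+j}\right)_{i,j=0}^{n-1}$ for $n\ge1$, $D(0)=1$ (so $D(n)\in\{1,-1\}$), and let $T_n=D(n)D(n+2)$ for $n\ge0$. Then: (i) for every $k\ge2$ and every $n$ with $2^k\le n\le 2^{k+1}-3$, $T_n=T_{2^{k+1}-3-n}$; (ii) $T_{4n}=(-1)^n$ for all $n\ge0$; (iii) $T_{2^{k+1}n+2^k-2}=(-1)^{n+1}$ for all $n\ge0$ and all $k\ge2$.
   Context: Also $T_0=1$ and $T_1=-1$. *)

theory Defs
  imports "HOL-Combinatorics.Permutations"
begin

definition A :: "nat \<Rightarrow> int" where
  "A n = (if \<exists>k::nat. n = 2^(k+1) - 2 then 1 else 0)"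

definition D :: "nat \<Rightarrow> int" where
  "D n = (\<Sum>p | p permutes {..<n}. sign p * (\<Prod>i<n. A (i + p i)))"

definition T :: "nat \<Rightarrow> int" where
  "T n = D n * D (n + 2)"

end

theory Submission
  imports Defs "Jordan_Normal_Form.Determinant"
begin

text \<open>Listing rows and columns in the order \<open>0, 2, 4, \<dots>, 1, 3, 5, \<dots>\<close> splits the Hankel matrix
  of \<open>A\<close> into blocks. Since \<open>A\<close> vanishes at odd arguments and \<open>A (2m + 2) = A m\<close>, this gives
  \<open>D n = E \<lceil>n/2\<rceil> D \<lfloor>n/2\<rfloor>\<close>, where \<open>E m\<close> is the Hankel determinant of \<open>B m = A (2m)\<close>;
  the same splitting applied to \<open>E\<close> gives \<open>E m = (-1)^\<lfloor>m/2\<rfloor>\<close>. Hence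
  \<open>D n = (-1)^\<lfloor>(n+1)/4\<rfloor> D \<lfloor>n/2\<rfloor>\<close> and \<open>T x = (-1)^\<lfloor>(x+1)/2\<rfloor> U \<lfloor>x/2\<rfloor>\<close> with
  \<open>U y = D y D (y + 1)\<close>, which satisfies \<open>U (2z) = (-1)^z\<close> and \<open>U (2z + 1) = U z\<close>.
  All three claims then reduce to binary arithmetic on the indices.\<close>

definition hankel :: "(nat \<Rightarrow> 'a) \<Rightarrow> nat \<Rightarrow> 'a mat" where
  "hankel f n = mat n n (\<lambda>(i, j). f (i + j))"

lemma hankel_carrier [simp]: "hankel f n \<in> carrier_mat n n"
  by (simp add: hankel_def)

lemma D_eq_det_hankel: "D n = det (hankel A n)"
  unfolding D_def det_def hankel_def
  by (auto simp: atLeast0LessThan intro!: sum.cong prod.cong)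

lemma det_permute_rows_cols:
  fixes M :: "'a :: comm_ring_1 mat"
  assumes M: "M \<in> carrier_mat n n" and p: "p permutes {0..<n}"
  shows "det (mat n n (\<lambda>(i, j). M $$ (p i, p j))) = det M"
proof -
  let ?R = "mat n n (\<lambda>(i, j). M $$ (p i, j))"
  have "det (mat n n (\<lambda>(i, j). M $$ (p i, p j)))
      = det (transpose_mat (mat n n (\<lambda>(i, j). transpose_mat ?R $$ (p i, j))))"
    using p by (intro arg_cong[where f = det] eq_matI) (auto simp: permutes_in_image)
  also have "\<dots> = det (mat n n (\<lambda>(i, j). transpose_mat ?R $$ (p i, j)))"
    by (rule det_transpose[of _ n]) simp
  also have "\<dots> = signof p * signof p * det M"
    using det_permute_rows[OF _ p, of "transpose_mat ?R"] det_permute_rows[OF M p]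
      det_transpose[of ?R n] by simp
  also have "signof p * signof p = (1 :: 'a)"
    by (simp add: sign_def)
  finally show ?thesis by simp
qed

definition even_odd_perm :: "nat \<Rightarrow> nat \<Rightarrow> nat" where
  "even_odd_perm n i =
     (if i < (n + 1) div 2 then 2 * i else if i < n then 2 * (i - (n + 1) div 2) + 1 else i)"

lemma even_odd_perm_permutes: "even_odd_perm n permutes {0..<n}"
proof (rule inj_on_nat_permutes)
  show "inj_on (even_odd_perm n) {0..<n}"
  proof (rule inj_onI)
    fix x y assume "x \<in> {0..<n}" "y \<in> {0..<n}" "even_odd_perm n x = even_odd_perm n y"
    then show "x = y"
      unfolding even_odd_perm_def by (auto split: if_splits dest: arg_cong[where f = even])
  qed
qed (auto simp: even_odd_perm_def)

lemma det_hankel_even_odd: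
  fixes f :: "nat \<Rightarrow> 'a :: comm_ring_1" and n :: nat
  defines "c \<equiv> (n + 1) div 2" and "h \<equiv> n div 2"
  shows "det (hankel f n) =
    det (four_block_mat (hankel (\<lambda>m. f (2 * m)) c) (mat c h (\<lambda>(a, b). f (2 * (a + b) + 1)))
                        (mat h c (\<lambda>(a, b). f (2 * (a + b) + 1))) (hankel (\<lambda>m. f (2 * m + 2)) h))"
    (is "_ = det ?M")
proof -
  let ?\<sigma> = "even_odd_perm n"
  have n: "n = c + h" unfolding c_def h_def by simp
  have "det (hankel f n) = det (mat n n (\<lambda>(i, j). hankel f n $$ (?\<sigma> i, ?\<sigma> j)))"
    by (rule det_permute_rows_cols[symmetric, OF _ even_odd_perm_permutes]) simp
  also have "mat n n (\<lambda>(i, j). hankel f n $$ (?\<sigma> i, ?\<sigma> j)) = ?M"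
  proof (rule eq_matI)
    fix i j assume "i < dim_row ?M" and "j < dim_col ?M"
    then have ij: "i < n" "j < n" using n by (auto simp: hankel_def)
    have \<sigma>: "?\<sigma> x = (if x < c then 2 * x else 2 * (x - c) + 1)" if "x < n" for x
      using that by (simp add: even_odd_perm_def c_def)
    have "?\<sigma> i < n" "?\<sigma> j < n"
      using ij even_odd_perm_permutes by (simp_all add: permutes_in_image)
    then have "mat n n (\<lambda>(i, j). hankel f n $$ (?\<sigma> i, ?\<sigma> j)) $$ (i, j) = f (?\<sigma> i + ?\<sigma> j)"
      using ij by (simp add: hankel_def)
    also have "\<dots> = ?M $$ (i, j)"
      using ij ij[unfolded n] \<sigma>[OF ij(1)] \<sigma>[OF ij(2)]
      by (cases "i < c"; cases "j < c") (simp_all add: hankel_def algebra_simps)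
    finally show "mat n n (\<lambda>(i, j). hankel f n $$ (?\<sigma> i, ?\<sigma> j)) $$ (i, j) = ?M $$ (i, j)" .
  qed (use n in \<open>auto simp: hankel_def\<close>)
  finally show ?thesis .
qed

lemma A_eq: "A n = (if \<exists>k. n + 2 = 2 ^ Suc k then 1 else 0)"
proof -
  have "n = 2 ^ Suc k - 2 \<longleftrightarrow> n + 2 = 2 ^ Suc k" for k :: nat
  proof -
    have "2 \<le> (2::nat) ^ Suc k" by simp
    then show ?thesis by linarith
  qed
  then show ?thesis unfolding A_def by simp
qed

lemma A_odd: "odd n \<Longrightarrow> A n = 0"
proof -
  assume "odd n"
  then have "n + 2 \<noteq> 2 ^ Suc k" for k :: nat
    by (auto dest: arg_cong[where f = even])
  then show ?thesis by (simp add: A_eq)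
qed

lemma A_double_Suc: "A (2 * m + 2) = A m"
proof -
  have "(\<exists>k. 2 * m + 2 + 2 = 2 ^ Suc k) \<longleftrightarrow> (\<exists>k. m + 2 = 2 ^ Suc k)"
  proof
    assume "\<exists>k. 2 * m + 2 + 2 = 2 ^ Suc k"
    then obtain k where k: "2 * (m + 2) = 2 ^ Suc k" by auto
    then obtain j where "k = Suc j" by (cases k) auto
    with k have "m + 2 = 2 ^ Suc j" by simp
    then show "\<exists>k. m + 2 = 2 ^ Suc k" ..
  next
    assume "\<exists>k. m + 2 = 2 ^ Suc k"
    then obtain k where "m + 2 = 2 ^ Suc k" ..
    then have "2 * m + 2 + 2 = 2 ^ Suc (Suc k)" by simp
    then show "\<exists>k. 2 * m + 2 + 2 = 2 ^ Suc k" ..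
  qed
  then show ?thesis by (simp add: A_eq)
qed

lemma A_mult_4: "A (4 * m) = (if m = 0 then 1 else 0)"
proof -
  have "4 * m + 2 \<noteq> 4 * x" for x :: nat by presburger
  then have "4 * m + 2 = 2 ^ Suc k \<longleftrightarrow> m = 0 \<and> k = 0" for k
    by (cases k) auto
  then show ?thesis by (simp add: A_eq)
qed

definition B :: "nat \<Rightarrow> int" where
  "B m = A (2 * m)"

lemma B_double: "B (2 * m) = (if m = 0 then 1 else 0)"
  using A_mult_4[of m] by (simp add: B_def mult.assoc)

lemma B_double_Suc: "B (2 * m + 1) = B m"
  using A_double_Suc[of "2 * m"] by (simp add: B_def algebra_simps)

lemma B_Suc: "B (Suc m) = A m"
  using A_double_Suc[of m] by (simp add: B_def algebra_simps)

definition E :: "nat \<Rightarrow> int" where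
  "E m = det (hankel B m)"

lemma D_rec: "D n = E ((n + 1) div 2) * D (n div 2)"
proof -
  let ?c = "(n + 1) div 2" and ?h = "n div 2"
  have "hankel (\<lambda>m. A (2 * m + 2)) ?h = hankel A ?h"
    by (simp only: A_double_Suc)
  moreover have "hankel (\<lambda>m. A (2 * m)) ?c = hankel B ?c"
    by (simp add: B_def[abs_def])
  moreover have "mat r s (\<lambda>(a, b). A (2 * (a + b) + 1)) = 0\<^sub>m r s" for r s
    by (intro eq_matI) (auto simp: A_odd)
  ultimately have "D n = det (four_block_mat (hankel B ?c) (0\<^sub>m ?c ?h) (0\<^sub>m ?h ?c) (hankel A ?h))"
    by (simp only: D_eq_det_hankel det_hankel_even_odd)
  also have "\<dots> = E ?c * D ?h"
    by (subst det_four_block_mat_lower_left_zero) (auto simp: E_def D_eq_det_hankel)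
  finally show ?thesis .
qed

lemma E_eq_det_blocks:
  "E n = det (four_block_mat
     (mat ((n + 1) div 2) ((n + 1) div 2) (\<lambda>(a, b). if a = 0 \<and> b = 0 then 1 else 0))
     (mat ((n + 1) div 2) (n div 2) (\<lambda>(a, b). B (a + b)))
     (mat (n div 2) ((n + 1) div 2) (\<lambda>(a, b). B (a + b))) (0\<^sub>m (n div 2) (n div 2)))"
proof -
  have "hankel (\<lambda>m. B (2 * m)) r = mat r r (\<lambda>(a, b). if a = 0 \<and> b = 0 then 1 else 0)" for r
    by (intro eq_matI) (auto simp: hankel_def B_double)
  moreover have "hankel (\<lambda>m. B (2 * m + 2)) r = 0\<^sub>m r r" for r
    using B_double[of "Suc _"] by (intro eq_matI) (auto simp: hankel_def)
  ultimately show ?thesis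
    by (simp only: E_def det_hankel_even_odd B_double_Suc)
qed

lemma minus_one_power_square: "(-1 :: 'a :: ring_1) ^ (h * h) = (-1) ^ h"
  by (simp add: minus_one_power_iff)

lemma E_double: "E (2 * h) = (-1) ^ h * E h ^ 2"
proof -
  let ?P = "mat h h (\<lambda>(a, b). if a = 0 \<and> b = 0 then 1 else (0 :: int))"
  let ?X = "mat h h (\<lambda>(a, b). B (a + b))"
  let ?M = "four_block_mat ?P ?X ?X (0\<^sub>m h h)"
  have "E (2 * h) = det ?M"
    using E_eq_det_blocks[of "2 * h"] by simp
  also have "\<dots> = (-1) ^ (h * h) * det (mat (h + h) (h + h)
      (\<lambda>(i, j). ?M $$ (i, if j < h then j + h else j - h)))"
    by (rule det_swap_cols) auto
  also have "mat (h + h) (h + h) (\<lambda>(i, j). ?M $$ (i, if j < h then j + h else j - h))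
      = four_block_mat ?X ?P (0\<^sub>m h h) ?X"
    by (intro eq_matI) auto
  also have "det (four_block_mat ?X ?P (0\<^sub>m h h) ?X) = det ?X * det ?X"
    by (rule det_four_block_mat_lower_left_zero) auto
  finally show ?thesis
    by (simp add: E_def hankel_def minus_one_power_square power2_eq_square)
qed

text \<open>Moving the last \<open>h\<close> columns behind the first one makes the matrix block triangular,
  and the shifted blocks \<open>B (a + b + 1) = A (a + b)\<close> are Hankel matrices of \<open>A\<close>.\<close>
lemma E_double_Suc: "E (2 * h + 1) = (-1) ^ h * D h ^ 2"
proof -
  let ?P = "mat (h + 1) (h + 1) (\<lambda>(a, b). if a = 0 \<and> b = 0 then 1 else (0 :: int))"
  let ?X = "mat (h + 1) h (\<lambda>(a, b). B (a + b))"
  let ?Y = "mat h (h + 1) (\<lambda>(a, b). B (a + b))"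
  let ?M = "four_block_mat ?P ?X ?Y (0\<^sub>m h h)"
  let ?Q = "four_block_mat (mat 1 1 (\<lambda>_. 1)) (mat 1 h (\<lambda>(a, b). B b)) (0\<^sub>m h 1) (hankel A h)"
  let ?R = "mat h (h + 1) (\<lambda>(b, j). if j = 0 then B b else 0)"
  let ?col = "\<lambda>j. if j < 1 then j else if j < 1 + h then j + h else j - h"
  have "E (2 * h + 1) = det ?M"
    using E_eq_det_blocks[of "2 * h + 1"] by simp
  also have "\<dots> = (-1) ^ (h * h) * det (mat (1 + h + h) (1 + h + h) (\<lambda>(i, j). ?M $$ (i, ?col j)))"
    by (rule det_swap_final_cols) auto
  also have "mat (1 + h + h) (1 + h + h) (\<lambda>(i, j). ?M $$ (i, ?col j))
      = four_block_mat ?Q (0\<^sub>m (h + 1) h) ?R (hankel A h)"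
    by (intro eq_matI)
       (auto simp: hankel_def B_Suc[symmetric] Suc_diff_le Suc_diff_Suc)
  also have "det (four_block_mat ?Q (0\<^sub>m (h + 1) h) ?R (hankel A h)) = det ?Q * det (hankel A h)"
    by (rule det_four_block_mat_upper_right_zero) (auto simp: hankel_def)
  also have "det ?Q = det (mat 1 1 (\<lambda>_. 1)) * det (hankel A h)"
    by (rule det_four_block_mat_lower_left_zero) auto
  also have "det (mat 1 1 (\<lambda>_. 1 :: int)) = 1"
    by (subst det_single) auto
  finally show ?thesis
    by (simp add: D_eq_det_hankel minus_one_power_square power2_eq_square)
qed

lemma D_0: "D 0 = 1"
  by (simp add: D_eq_det_hankel hankel_def)

lemma E_0: "E 0 = 1"
  by (simp add: E_def hankel_def)

lemma abs_D_E: "\<bar>D n\<bar> = 1 \<and> \<bar>E n\<bar> = 1"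
proof (induction n rule: less_induct)
  case (less n)
  have E: "\<bar>E n\<bar> = 1"
  proof (cases "even n")
    case True
    then obtain h where h: "n = 2 * h" by (rule evenE)
    show ?thesis
    proof (cases "h = 0")
      case False
      then have "\<bar>E h\<bar> = 1" using less h by simp
      then show ?thesis by (simp add: h E_double abs_mult power_abs)
    qed (simp add: h E_0)
  next
    case False
    then obtain h where h: "n = 2 * h + 1" by (rule oddE)
    then have "\<bar>D h\<bar> = 1" using less by simp
    then show ?thesis unfolding h E_double_Suc by (simp add: abs_mult power_abs)
  qed
  show ?case
  proof (cases "n = 0")
    case False
    then have "\<bar>D (n div 2)\<bar> = 1" using less by simp
    moreover have "\<bar>E ((n + 1) div 2)\<bar> = 1"
      using E less[of "(n + 1) div 2"] by (cases "(n + 1) div 2 = n") auto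
    ultimately show ?thesis using E by (simp add: D_rec[of n] abs_mult)
  qed (simp add: D_0 E_0)
qed

lemma E_eq: "E m = (-1) ^ (m div 2)"
proof (cases "even m")
  case True
  then obtain h where "m = 2 * h" by (rule evenE)
  then show ?thesis using abs_D_E[of h] by (simp add: E_double abs_square_eq_1)
next
  case False
  then obtain h where h: "m = 2 * h + 1" by (rule oddE)
  show ?thesis using abs_D_E[of h] unfolding h E_double_Suc by (simp add: abs_square_eq_1)
qed

lemma D_rec_sign: "D n = (-1) ^ ((n + 1) div 4) * D (n div 2)"
  by (simp add: D_rec[of n] E_eq div_mult2_eq[symmetric])

definition U :: "nat \<Rightarrow> int" where
  "U y = D y * D (y + 1)"

lemma T_eq: "T x = (-1) ^ ((x + 1) div 2) * U (x div 2)"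
proof -
  have half: "(x + 2) div 2 = x div 2 + 1" by simp
  have "T x = ((-1) ^ ((x + 1) div 4) * (-1) ^ ((x + 2 + 1) div 4)) * U (x div 2)"
    unfolding T_def U_def D_rec_sign[of x] D_rec_sign[of "x + 2"] half by (simp only: mult_ac)
  also have "(-1) ^ ((x + 1) div 4) * (-1) ^ ((x + 2 + 1) div 4) = (-1 :: int) ^ ((x + 1) div 2)"
    unfolding power_add[symmetric] by (rule arg_cong[of _ _ "power (-1)"]) presburger
  finally show ?thesis .
qed

lemma U_double: "U (2 * z) = (-1) ^ z"
proof -
  have "U (2 * z) = ((-1) ^ ((2 * z + 1) div 4) * (-1) ^ ((2 * z + 1 + 1) div 4)) * D z ^ 2"
    unfolding U_def D_rec_sign[of "2 * z"] D_rec_sign[of "2 * z + 1"]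
    by (simp add: power2_eq_square)
  also have "(-1) ^ ((2 * z + 1) div 4) * (-1) ^ ((2 * z + 1 + 1) div 4) = (-1 :: int) ^ z"
    unfolding power_add[symmetric] by (rule arg_cong[of _ _ "power (-1)"]) presburger
  finally show ?thesis
    using abs_D_E[of z] by (simp add: abs_square_eq_1)
qed

lemma U_double_Suc: "U (2 * z + 1) = U z"
proof -
  have "(2 * z + 1 + 1) div 4 = (2 * z + 2 + 1) div 4"
    by presburger
  then have "U (2 * z + 1) = ((-1) ^ ((2 * z + 2) div 4)) ^ 2 * U z"
    using D_rec_sign[of "2 * z + 1"] D_rec_sign[of "2 * z + 2"]
    by (simp add: U_def power2_eq_square)
  then show ?thesis
    by (simp flip: power_mult)
qed

lemma U_antisymmetric: "y + y' + 2 = 2 ^ (k + 1) \<Longrightarrow> y \<noteq> y' \<Longrightarrow> U y = - U y'"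
proof (induction k arbitrary: y y')
  case (Suc k)
  define t :: nat where "t = 2 ^ k"
  have sum: "y + y' + 2 = 4 * t"
    using Suc.prems(1) by (simp add: t_def)
  show ?case
  proof (cases "even y")
    case True
    then obtain z where z: "y = 2 * z" by (rule evenE)
    have "even y'" using sum True by presburger
    then obtain z' where z': "y' = 2 * z'" by (rule evenE)
    from sum have "odd (z + z')"
      unfolding z z' by presburger
    then show ?thesis
      unfolding z z' U_double by (auto simp: minus_one_power_iff)
  next
    case False
    then obtain z where z: "y = 2 * z + 1" by (rule oddE)
    have "odd y'" using sum False by presburger
    then obtain z' where z': "y' = 2 * z' + 1" by (rule oddE)
    have "z + z' + 2 = 2 ^ (k + 1)" "z \<noteq> z'"
      using sum Suc.prems(2) unfolding z z' t_def by simp_all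
    then show ?thesis
      unfolding z z' U_double_Suc by (rule Suc.IH)
  qed
qed simp

lemma U_pow2_mult_odd: "U (2 ^ i * (2 * n + 1) - 1) = (-1) ^ n"
proof (induction i)
  case (Suc i)
  define q :: nat where "q = 2 ^ i * (2 * n + 1)"
  have "q > 0" "2 ^ Suc i * (2 * n + 1) = 2 * q"
    unfolding q_def by simp_all
  then have "2 ^ Suc i * (2 * n + 1) - 1 = 2 * (q - 1) + 1"
    by linarith
  then show ?case
    using Suc.IH unfolding q_def by (simp only: U_double_Suc)
qed (simp add: U_double)

lemma T_mult_4: "T (4 * n) = (-1) ^ n"
proof -
  have "(4 * n + 1) div 2 = 2 * n" "4 * n div 2 = 2 * n"
    by presburger+
  then show ?thesis
    by (simp add: T_eq U_double power_mult)
qed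

lemma halves_of_sum_3_mod_4:
  fixes a b t :: nat
  assumes sum: "a + b + 3 = 4 * t"
  shows "(a + 1) div 2 + (b + 1) div 2 + 1 = 2 * t" "a div 2 + b div 2 + 2 = 2 * t"
proof -
  have "odd (a + b)"
    using arg_cong[OF sum, of even] by simp
  then have "a mod 2 + b mod 2 = 1"
    by (simp add: mod2_eq_if split: if_splits)
  moreover have "(x + 1) div 2 = x div 2 + x mod 2" for x :: nat
    by presburger
  moreover have "a = 2 * (a div 2) + a mod 2" "b = 2 * (b div 2) + b mod 2"
    by simp_all
  ultimately show "(a + 1) div 2 + (b + 1) div 2 + 1 = 2 * t" "a div 2 + b div 2 + 2 = 2 * t"
    using sum by linarith+
qed

lemma T_reflection:
  assumes sum: "n + n' + 3 = 2 ^ (k + 2)" and halves: "n div 2 \<noteq> n' div 2"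
  shows "T n = T n'"
proof -
  have sum': "n + n' + 3 = 4 * 2 ^ k"
    using sum by (simp add: power_add)
  have "(-1 :: int) ^ ((n + 1) div 2) = - ((-1) ^ ((n' + 1) div 2))"
  proof -
    have "odd ((n + 1) div 2 + (n' + 1) div 2)"
      using arg_cong[OF halves_of_sum_3_mod_4(1)[OF sum'], of even] by simp
    then show ?thesis
      by (auto simp: minus_one_power_iff)
  qed
  moreover have "U (n div 2) = - U (n' div 2)"
    using halves_of_sum_3_mod_4(2)[OF sum'] halves by (intro U_antisymmetric) simp_all
  ultimately show ?thesis
    by (simp add: T_eq)
qed

lemma T_pow2_mult_odd:
  assumes "k \<ge> 2"
  shows "T (2 ^ k * (2 * n + 1) - 2) = (-1) ^ (n + 1)"
proof -
  obtain j where k: "k = j + 2"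
    using assms by (metis add.commute le_add_diff_inverse)
  define y where "y = 2 ^ (j + 1) * (2 * n + 1) - 1"
  have "(2::nat) \<le> 2 ^ (j + 1)" "2 ^ (j + 1) \<le> 2 ^ (j + 1) * (2 * n + 1)"
    "2 ^ k * (2 * n + 1) = 2 * (2 ^ (j + 1) * (2 * n + 1))"
    unfolding k by simp_all
  then have x: "2 ^ k * (2 * n + 1) - 2 = 2 * y"
    unfolding y_def by linarith
  have "odd y"
    unfolding y_def by simp
  moreover have "U y = (-1) ^ n"
    unfolding y_def by (rule U_pow2_mult_odd)
  ultimately show ?thesis
    unfolding x by (simp add: T_eq)
qed

theorem theorem2p7:
  shows "(\<forall>k n. k \<ge> 2 \<longrightarrow> 2^k \<le> n \<longrightarrow> n \<le> 2^(k+1) - 3 \<longrightarrow> T n = T (2^(k+1) - 3 - n))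
       \<and> (\<forall>n. T (4*n) = (-1)^n)
       \<and> (\<forall>n k. k \<ge> 2 \<longrightarrow> T (2^(k+1)*n + 2^k - 2) = (-1)^(n+1))"
proof (intro conjI allI impI)
  fix k n :: nat
  assume k: "k \<ge> 2" and lo: "2 ^ k \<le> n" and hi: "n \<le> 2 ^ (k + 1) - 3"
  let ?n' = "2 ^ (k + 1) - 3 - n"
  have "(1::nat) \<le> 2 ^ k" "(2::nat) ^ (k + 1) = 2 * 2 ^ k"
    by simp_all
  then have sum: "n + ?n' + 3 = 2 ^ (k + 1)" and "?n' + 2 \<le> n"
    using lo hi by linarith+
  then have "n div 2 \<noteq> ?n' div 2"
    using div_le_mono[of "?n' + 2" n 2] by simp
  moreover have "k + 1 = k - 1 + 2"
    using k by simp
  ultimately show "T n = T ?n'"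
    using T_reflection sum by metis
next
  fix n k :: nat
  assume "k \<ge> 2"
  moreover have "2 ^ (k + 1) * n + 2 ^ k - 2 = 2 ^ k * (2 * n + 1) - 2"
    by (simp add: algebra_simps)
  ultimately show "T (2 ^ (k + 1) * n + 2 ^ k - 2) = (-1) ^ (n + 1)"
    using T_pow2_mult_odd by simp
qed (rule T_mult_4)

end
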